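(* Let $f(n), g(n)$ be as below, and define $F_1(x)=\sum_{n\text{ odd}} f(n)x^n/n!$, $F_2(x)=\sum_{n\text{ even}} f(n)x^n/n!$, $G_1(x)=\sum_{n\text{ odd}} g(n)x^n/n!$, $G_2(x)=\sum_{n\text{ even}} g(n)x^n/n!$. Then \[ F_1'=F_2^2,\quad F_2'=F_1F_2+G_1,\quad G_1'=F_2(F_2-G_2)+F_2,\quad G_2'=F_2(F_1-G_1)+G_1, \] with $F_1(0)=G_1(0)=0$, $F_2(0)=G_2(0)=1$, and, writing $\Delta(x)=3\cos x+4-\cosh(\sqrt3 x)$, \[ F_1=\frac{\sqrt3\sinh(\sqrt3x)+3\sin x}{\Delta},\qquad F_2=\frac{2\sqrt3\sin(\tfrac12x)\sinh(\tfrac12\sqrt3x)+6\cos(\tfrac12x)\cosh(\tfrac12\sqrt3x)}{\Delta}, \] \[ G_1=\frac{4\sqrt3\cos(\tfrac12x)\sinh(\tfrac12\sqrt3x)}{\Delta},\qquad G_2=\frac{6\cos(\tfrac12x)\cosh(\tfrac12\sqrt3x)+2\sqrt3\sin(\tfrac12x)\sinh(\tfrac12\sqrt3x)+2-2\cosh(\sqrt3x)}{\Delta}. \]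
   Context: $f(n)$ is the number of permutations $\pi_1\cdots\pi_n$ of $[n]$ with every valley index even and every peak index odd (index $i\in\{2,\dots,n-1\}$ is a peak if $\pi_{i-1}<\pi_i>\pi_{i+1}$, a valley if $\pi_{i-1}>\pi_i<\pi_{i+1}$); $g(n)$ is the number of those that end with an ascent ($\pi_{n-1}<\pi_n$); $f(0)=g(0)=1$. Equivalently $f,g$ are determined by the recurrences: for $n\ge0$, $f(n+1)=\sum_{k=0}^{\lfloor (n-1)/2\rfloor}\binom{n}{2k}f(2k)f(n-2k)+[f(n)\text{ if } n \text{ even}, g(n)\text{ if } n\text{ odd}]$ and $g(n+1)=\sum_{k=0}^{\lfloor (n-2)/2\rfloor}\binom{n}{2k}f(2k)[f(n-2k)-g(n-2k)]+[f(n)\text{ if } n \text{ even}, g(n)\text{ if } n\text{ odd}]$. *)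

theory Defs
  imports Complex_Main "HOL-Computational_Algebra.Formal_Power_Series"
begin

text \<open>The index bound k \<le> floor((n-1)/2) is written 2*k+1 \<le> n, and
  k \<le> floor((n-2)/2) is written 2*k+2 \<le> n (empty sums when n is small).\<close>

function pv_f :: "nat \<Rightarrow> int" and pv_g :: "nat \<Rightarrow> int" where
  "pv_f 0 = 1"
| "pv_f (Suc n) =
     (\<Sum>k\<in>{k. 2*k+1 \<le> n}. int (n choose (2*k)) * pv_f (2*k) * pv_f (n - 2*k))
     + (if even n then pv_f n else pv_g n)"
| "pv_g 0 = 1"
| "pv_g (Suc n) =
     (\<Sum>k\<in>{k. 2*k+2 \<le> n}. int (n choose (2*k)) * pv_f (2*k) * (pv_f (n - 2*k) - pv_g (n - 2*k)))
     + (if even n then pv_f n else pv_g n)"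
  by pat_completeness auto
termination
  by (relation "measure (\<lambda>x. case x of Inl n \<Rightarrow> n | Inr n \<Rightarrow> n)") auto

definition F1 :: "real fps" where
  "F1 = Abs_fps (\<lambda>n. if odd n then of_int (pv_f n) / fact n else 0)"
definition F2 :: "real fps" where
  "F2 = Abs_fps (\<lambda>n. if even n then of_int (pv_f n) / fact n else 0)"
definition G1 :: "real fps" where
  "G1 = Abs_fps (\<lambda>n. if odd n then of_int (pv_g n) / fact n else 0)"
definition G2 :: "real fps" where
  "G2 = Abs_fps (\<lambda>n. if even n then of_int (pv_g n) / fact n else 0)"

definition fps_sinh :: "real \<Rightarrow> real fps" where
  "fps_sinh c = (fps_exp c - fps_exp (- c)) * fps_const (1/2)"
definition fps_cosh :: "real \<Rightarrow> real fps" where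
  "fps_cosh c = (fps_exp c + fps_exp (- c)) * fps_const (1/2)"

definition Delta :: "real fps" where
  "Delta = fps_const 3 * fps_cos 1 + fps_const 4 - fps_cosh (sqrt 3)"

end

theory Submission
  imports Defs
begin

(* Let E_f and E_g be the exponential generating functions of all
   f(n) and g(n), so that F1, F2 (resp. G1, G2) are their odd and even parts.
   Read coefficientwise, the two recurrences say exactly
     E_f' = F2 E_f + G1        and        E_g' = F2 (E_f - E_g) + F2 + G1.
   Splitting these identities into even and odd parts (the derivative of an odd
   series is even, an even times an odd series is odd, ...) yields the four
   differential equations for F1, F2, G1, G2.
   Such a system determines a solution uniquely from its constant terms, since the
   n-th coefficient of the right-hand sides only involves coefficients up to n.
   So it remains to check that the four closed forms N/Delta satisfy the same
   system with the same constant terms.  Writing everything in terms of the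
   half-angle series sin(x/2), cos(x/2), sinh(sqrt 3 x/2), cosh(sqrt 3 x/2), the
   quotient rule reduces this to four polynomial identities that follow from
   sin^2 + cos^2 = 1 and cosh^2 - sinh^2 = 1. *)

unbundle fps_syntax

definition egf_f :: "real fps" where
  "egf_f = Abs_fps (\<lambda>n. of_int (pv_f n) / fact n)"

definition egf_g :: "real fps" where
  "egf_g = Abs_fps (\<lambda>n. of_int (pv_g n) / fact n)"

lemma egf_f_nth: "egf_f $ n = of_int (pv_f n) / fact n"
  and egf_g_nth: "egf_g $ n = of_int (pv_g n) / fact n"
  by (simp_all add: egf_f_def egf_g_def)

lemma F1_nth: "F1 $ n = (if odd n then of_int (pv_f n) / fact n else 0)"
  and F2_nth: "F2 $ n = (if even n then of_int (pv_f n) / fact n else 0)"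
  and G1_nth: "G1 $ n = (if odd n then of_int (pv_g n) / fact n else 0)"
  and G2_nth: "G2 $ n = (if even n then of_int (pv_g n) / fact n else 0)"
  by (simp_all add: F1_def F2_def G1_def G2_def)

lemma egf_f_parts: "egf_f = F1 + F2" and egf_g_parts: "egf_g = G1 + G2"
  by (simp_all add: fps_eq_iff egf_f_nth egf_g_nth F1_nth F2_nth G1_nth G2_nth)

lemma pv_f_one: "pv_f 1 = 1" and pv_g_one: "pv_g 1 = 1"
  by simp_all

lemma sum_even_indices:
  fixes h :: "nat \<Rightarrow> 'a::comm_monoid_add"
  shows "(\<Sum>k\<in>{k. 2*k+1 \<le> n}. h (2*k)) = (\<Sum>i<n. if even i then h i else 0)"
proof -
  have "(\<Sum>i<n. if even i then h i else 0) = (\<Sum>i\<in>{i\<in>{..<n}. even i}. h i)"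
    by (rule sum.inter_filter[symmetric]) simp
  also have "\<dots> = (\<Sum>k\<in>{k. 2*k+1 \<le> n}. h (2*k))"
    by (rule sum.reindex_bij_witness[where j="\<lambda>i. i div 2" and i="\<lambda>k. 2*k"])
      (auto elim!: evenE)
  finally show ?thesis by simp
qed

lemma fps_deriv_egf:
  "fps_deriv (Abs_fps (\<lambda>n. a n / fact n))
     = Abs_fps (\<lambda>n. a (Suc n) / (fact n :: 'a::field_char_0))"
  by (rule fps_ext) (simp add: fact_Suc del: of_nat_Suc)

(* The recurrence for f, divided by n!: the binomial convolution becomes a
   coefficient of F2 * egf_f; the term i = n of that product supplies f(n) for even n. *)
lemma pv_f_Suc_egf:
  "of_int (pv_f (Suc n)) / fact n = (\<Sum>i=0..n. F2 $ i * egf_f $ (n - i)) + G1 $ n"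
proof -
  define t where "t i = real (n choose i) * (of_int (pv_f i) * of_int (pv_f (n - i)))" for i
  have rec: "of_int (pv_f (Suc n)) = (\<Sum>i<n. if even i then t i else 0)
      + (if even n then of_int (pv_f n) else of_int (pv_g n))"
    using sum_even_indices[where h=t and n=n] by (simp add: t_def mult.assoc)
  have summand: "F2 $ i * egf_f $ (n - i) = (if even i then t i / fact n else 0)"
    if "i \<le> n" for i
    using that by (simp add: F2_nth egf_f_nth t_def binomial_fact)
  have "(\<Sum>i=0..n. F2 $ i * egf_f $ (n - i))
      = (\<Sum>i<n. F2 $ i * egf_f $ (n - i)) + F2 $ n * egf_f $ 0"
    by (simp add: atLeast0AtMost lessThan_Suc_atMost[symmetric])
  also have "(\<Sum>i<n. F2 $ i * egf_f $ (n - i)) = (\<Sum>i<n. if even i then t i / fact n else 0)"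
    by (rule sum.cong) (simp_all add: summand)
  finally show ?thesis
    unfolding rec
    by (simp add: F2_nth G1_nth egf_f_nth add_divide_distrib sum_divide_distrib
        if_distrib[of "\<lambda>x. x / fact n"] cong: if_cong)
qed

(* The recurrence for g, divided by n!.  The convolution stops at i < n - 1, but the
   two missing terms of F2 * (egf_f - egf_g) vanish because f and g agree at 0 and 1. *)
lemma pv_g_Suc_egf:
  "of_int (pv_g (Suc n)) / fact n
     = (\<Sum>i=0..n. F2 $ i * (egf_f - egf_g) $ (n - i)) + F2 $ n + G1 $ n"
proof -
  define t where "t i = real (n choose i)
      * (of_int (pv_f i) * (of_int (pv_f (n - i)) - of_int (pv_g (n - i))))" for i
  have "{k. 2*k+2 \<le> n} = {k. 2*k+1 \<le> n - 1}" by auto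
  then have rec: "of_int (pv_g (Suc n)) = (\<Sum>i<n-1. if even i then t i else 0)
      + (if even n then of_int (pv_f n) else of_int (pv_g n))"
    using sum_even_indices[where h=t and n="n-1"] by (simp add: t_def mult.assoc)
  have summand: "F2 $ i * (egf_f - egf_g) $ (n - i) = (if even i then t i / fact n else 0)"
    if "i \<le> n" for i
    using that
    by (simp add: F2_nth egf_f_nth egf_g_nth t_def binomial_fact right_diff_distrib
        diff_divide_distrib)
  have vanish: "F2 $ i * (egf_f - egf_g) $ (n - i) = 0" if "n - 1 \<le> i" "i \<le> n" for i
  proof -
    have "n - i = 0 \<or> n - i = 1" using that by linarith
    then show ?thesis by (auto simp: egf_f_nth egf_g_nth pv_f_one pv_g_one)
  qed
  have "(\<Sum>i=0..n. F2 $ i * (egf_f - egf_g) $ (n - i))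
      = (\<Sum>i<n-1. F2 $ i * (egf_f - egf_g) $ (n - i))"
    by (rule sum.mono_neutral_right) (use vanish in auto)
  also have "\<dots> = (\<Sum>i<n-1. if even i then t i / fact n else 0)"
    by (rule sum.cong) (simp_all add: summand del: fps_sub_nth)
  finally show ?thesis
    unfolding rec
    by (simp add: F2_nth G1_nth add_divide_distrib sum_divide_distrib
        if_distrib[of "\<lambda>x. x / fact n"] cong: if_cong)
qed

lemma egf_f_deriv: "fps_deriv egf_f = F2 * egf_f + G1"
proof (rule fps_ext)
  fix n
  have "fps_deriv egf_f $ n = of_int (pv_f (Suc n)) / fact n"
    unfolding egf_f_def fps_deriv_egf by (simp del: pv_f.simps)
  then show "fps_deriv egf_f $ n = (F2 * egf_f + G1) $ n"
    by (simp only: pv_f_Suc_egf fps_add_nth fps_mult_nth)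
qed

lemma egf_g_deriv: "fps_deriv egf_g = F2 * (egf_f - egf_g) + F2 + G1"
proof (rule fps_ext)
  fix n
  have "fps_deriv egf_g $ n = of_int (pv_g (Suc n)) / fact n"
    unfolding egf_g_def fps_deriv_egf by (simp del: pv_g.simps)
  then show "fps_deriv egf_g $ n = (F2 * (egf_f - egf_g) + F2 + G1) $ n"
    by (simp only: pv_g_Suc_egf fps_add_nth fps_mult_nth)
qed

definition even_fps :: "'a::zero fps \<Rightarrow> bool" where
  "even_fps A \<longleftrightarrow> (\<forall>n. odd n \<longrightarrow> A $ n = 0)"

definition odd_fps :: "'a::zero fps \<Rightarrow> bool" where
  "odd_fps A \<longleftrightarrow> (\<forall>n. even n \<longrightarrow> A $ n = 0)"

lemma even_fps_add: "even_fps A \<Longrightarrow> even_fps B \<Longrightarrow> even_fps (A + B)"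
  and even_fps_diff: "even_fps C \<Longrightarrow> even_fps D \<Longrightarrow> even_fps (C - D)"
  and odd_fps_add: "odd_fps A \<Longrightarrow> odd_fps B \<Longrightarrow> odd_fps (A + B)"
  and odd_fps_diff: "odd_fps C \<Longrightarrow> odd_fps D \<Longrightarrow> odd_fps (C - D)"
  for A B :: "'a::monoid_add fps" and C D :: "'b::group_add fps"
  by (simp_all add: even_fps_def odd_fps_def)

lemma even_fps_mult:
  fixes A B :: "'a::semiring_0 fps"
  assumes "even_fps A" "even_fps B"
  shows "even_fps (A * B)"
  unfolding even_fps_def
proof (intro allI impI)
  fix n :: nat
  assume "odd n"
  have "A $ i * B $ (n - i) = 0" if "i \<le> n" for i
    using assms \<open>odd n\<close> that by (cases "even i") (auto simp: even_fps_def)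
  then show "(A * B) $ n = 0" by (simp add: fps_mult_nth)
qed

lemma even_odd_fps_mult:
  fixes A B :: "'a::semiring_0 fps"
  assumes "even_fps A" "odd_fps B"
  shows "odd_fps (A * B)"
  unfolding odd_fps_def
proof (intro allI impI)
  fix n :: nat
  assume "even n"
  have "A $ i * B $ (n - i) = 0" if "i \<le> n" for i
    using assms \<open>even n\<close> that by (cases "even i") (auto simp: even_fps_def odd_fps_def)
  then show "(A * B) $ n = 0" by (simp add: fps_mult_nth)
qed

lemma odd_fps_deriv: "odd_fps A \<Longrightarrow> even_fps (fps_deriv A)"
  and even_fps_deriv: "even_fps A \<Longrightarrow> odd_fps (fps_deriv A)"
  by (simp_all add: even_fps_def odd_fps_def)

lemma fps_parity_split:
  fixes A B C D :: "'a::monoid_add fps"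
  assumes "even_fps A" "even_fps B" "odd_fps C" "odd_fps D" and "A + C = B + D"
  shows "A = B \<and> C = D"
proof -
  have "A $ n = B $ n \<and> C $ n = D $ n" for n
    using assms(1-4) arg_cong[OF assms(5), of "\<lambda>X. X $ n"]
    by (cases "even n") (auto simp: even_fps_def odd_fps_def)
  then show ?thesis by (simp add: fps_eq_iff)
qed

lemma F1_odd: "odd_fps F1" and F2_even: "even_fps F2"
  and G1_odd: "odd_fps G1" and G2_even: "even_fps G2"
  by (simp_all add: odd_fps_def even_fps_def F1_nth F2_nth G1_nth G2_nth)

definition solves_system :: "'a::comm_ring_1 fps \<Rightarrow> 'a fps \<Rightarrow> 'a fps \<Rightarrow> 'a fps \<Rightarrow> bool" where
  "solves_system A1 A2 B1 B2 \<longleftrightarrow>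
     fps_deriv A1 = A2 ^ 2 \<and> fps_deriv A2 = A1 * A2 + B1 \<and>
     fps_deriv B1 = A2 * (A2 - B2) + A2 \<and> fps_deriv B2 = A2 * (A1 - B1) + B1"

(* The even and odd parts of the two generating-function identities. *)
lemma egf_system: "solves_system F1 F2 G1 G2"
proof -
  have "fps_deriv F1 + fps_deriv F2 = F2 * F2 + (F2 * F1 + G1)"
    using egf_f_deriv unfolding egf_f_parts by (simp add: algebra_simps)
  then have f: "fps_deriv F1 = F2 * F2 \<and> fps_deriv F2 = F2 * F1 + G1"
    by (intro fps_parity_split odd_fps_deriv even_fps_deriv even_fps_mult even_odd_fps_mult
        odd_fps_add F1_odd F2_even G1_odd)
  have "fps_deriv G1 + fps_deriv G2 = (F2 * (F2 - G2) + F2) + (F2 * (F1 - G1) + G1)"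
    using egf_g_deriv unfolding egf_f_parts egf_g_parts by (simp add: algebra_simps)
  then have g: "fps_deriv G1 = F2 * (F2 - G2) + F2 \<and> fps_deriv G2 = F2 * (F1 - G1) + G1"
    by (intro fps_parity_split odd_fps_deriv even_fps_deriv even_fps_mult even_odd_fps_mult
        odd_fps_add even_fps_add even_fps_diff odd_fps_diff F1_odd F2_even G1_odd G2_even)
  from f g show ?thesis by (simp add: solves_system_def power2_eq_square mult.commute)
qed

lemma egf_initial: "F1 $ 0 = 0" "F2 $ 0 = 1" "G1 $ 0 = 0" "G2 $ 0 = 1"
  by (simp_all add: F1_nth F2_nth G1_nth G2_nth)

lemma fps_nth_Suc_eq_by_deriv:
  fixes X Y :: "'a::{ring_1_no_zero_divisors,semiring_char_0} fps"
  assumes "fps_deriv X $ n = fps_deriv Y $ n"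
  shows "X $ Suc n = Y $ Suc n"
proof -
  have "of_nat (Suc n) * X $ Suc n = of_nat (Suc n) * Y $ Suc n"
    using assms by (simp del: of_nat_Suc)
  then show ?thesis by (simp del: of_nat_Suc)
qed

lemma fps_mult_nth_cong:
  assumes "\<forall>i\<le>n. A $ i = A' $ i" "\<forall>i\<le>n. B $ i = B' $ i"
  shows "(A * B) $ n = (A' * B') $ n"
  using assms by (simp add: fps_mult_nth)

lemma solves_system_unique:
  fixes A1 A2 B1 B2 A1' A2' B1' B2' :: "'a::{idom,ring_char_0} fps"
  assumes sol: "solves_system A1 A2 B1 B2" and sol': "solves_system A1' A2' B1' B2'"
    and init: "A1 $ 0 = A1' $ 0" "A2 $ 0 = A2' $ 0" "B1 $ 0 = B1' $ 0" "B2 $ 0 = B2' $ 0"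
  shows "A1 = A1' \<and> A2 = A2' \<and> B1 = B1' \<and> B2 = B2'"
proof -
  have "\<forall>m\<le>n. A1 $ m = A1' $ m \<and> A2 $ m = A2' $ m \<and> B1 $ m = B1' $ m \<and> B2 $ m = B2' $ m"
    for n
  proof (induction n)
    case 0
    then show ?case using init by simp
  next
    case (Suc n)
    then have a1: "\<forall>i\<le>n. A1 $ i = A1' $ i" and a2: "\<forall>i\<le>n. A2 $ i = A2' $ i"
      and b1: "\<forall>i\<le>n. B1 $ i = B1' $ i" and b2: "\<forall>i\<le>n. B2 $ i = B2' $ i"
      by auto
    have "fps_deriv A1 $ n = fps_deriv A1' $ n"
      using sol sol' by (simp add: solves_system_def power2_eq_square fps_mult_nth_cong[OF a2 a2])
    moreover have "fps_deriv A2 $ n = fps_deriv A2' $ n"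
      using sol sol' b1 by (simp add: solves_system_def fps_mult_nth_cong[OF a1 a2])
    moreover have "fps_deriv B1 $ n = fps_deriv B1' $ n"
      using sol sol' a2 b2
      by (simp add: solves_system_def fps_mult_nth_cong[of n A2 A2' "A2 - B2"])
    moreover have "fps_deriv B2 $ n = fps_deriv B2' $ n"
      using sol sol' a1 a2 b1
      by (simp add: solves_system_def fps_mult_nth_cong[of n A2 A2' "A1 - B1"])
    ultimately have "A1 $ Suc n = A1' $ Suc n \<and> A2 $ Suc n = A2' $ Suc n \<and>
        B1 $ Suc n = B1' $ Suc n \<and> B2 $ Suc n = B2' $ Suc n"
      by (blast intro: fps_nth_Suc_eq_by_deriv)
    with Suc.IH show ?case by (auto simp: le_Suc_eq)
  qed
  then show ?thesis by (auto simp: fps_eq_iff)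
qed

lemma fps_deriv_quotient:
  fixes N D :: "'a::field fps"
  assumes "D $ 0 \<noteq> 0"
  shows "fps_deriv (N * inverse D) = (fps_deriv N * D - N * fps_deriv D) * inverse D ^ 2"
proof -
  have "D * inverse D = 1" using assms by (rule inverse_mult_eq_1')
  then show ?thesis
    using fps_inverse_deriv[OF assms] by (simp add: fps_deriv_mult power2_eq_square algebra_simps)
qed

lemma quotients_solve_system:
  fixes N1 N2 N3 N4 D :: "'a::field fps"
  assumes D0: "D $ 0 \<noteq> 0"
    and "fps_deriv N1 * D - N1 * fps_deriv D = N2 ^ 2"
    and "fps_deriv N2 * D - N2 * fps_deriv D = N1 * N2 + N3 * D"
    and "fps_deriv N3 * D - N3 * fps_deriv D = N2 * (N2 - N4) + N2 * D"
    and "fps_deriv N4 * D - N4 * fps_deriv D = N2 * (N1 - N3) + N3 * D"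
  shows "solves_system (N1 * inverse D) (N2 * inverse D) (N3 * inverse D) (N4 * inverse D)"
proof -
  have "D * inverse D = 1" using D0 by (rule inverse_mult_eq_1')
  then show ?thesis
    unfolding solves_system_def fps_deriv_quotient[OF D0] assms(2-5)
    by (simp add: power2_eq_square) algebra
qed

lemma fps_sinh_deriv: "fps_deriv (fps_sinh c) = fps_const c * fps_cosh c"
  and fps_cosh_deriv: "fps_deriv (fps_cosh c) = fps_const c * fps_sinh c"
  by (simp_all add: fps_sinh_def fps_cosh_def algebra_simps flip: fps_const_neg)

lemma fps_two_halves: "2 * fps_const (1/2::real) = 1"
  by (simp add: numeral_fps_const)

lemma fps_exp_times_exp_neg: "fps_exp c * fps_exp (- c) = (1::real fps)"
  using fps_exp_add_mult[of c "- c"] by simp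

lemma fps_cosh_sinh_squares: "fps_cosh c ^ 2 - fps_sinh c ^ 2 = 1"
  unfolding fps_sinh_def fps_cosh_def
  using fps_two_halves fps_exp_times_exp_neg[of c] by algebra

lemma fps_sinh_double: "fps_sinh (2 * c) = 2 * fps_sinh c * fps_cosh c"
  and fps_cosh_double: "fps_cosh (2 * c) = fps_cosh c ^ 2 + fps_sinh c ^ 2"
proof -
  have e1: "fps_exp (2 * c) = fps_exp c * fps_exp c"
    using fps_exp_add_mult[of c c] by simp
  have e2: "fps_exp (- (2 * c)) = fps_exp (- c) * fps_exp (- c)"
    using fps_exp_add_mult[of "- c" "- c"] by simp
  show "fps_sinh (2 * c) = 2 * fps_sinh c * fps_cosh c"
    unfolding fps_sinh_def fps_cosh_def e1 e2 using fps_two_halves by algebra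
  show "fps_cosh (2 * c) = fps_cosh c ^ 2 + fps_sinh c ^ 2"
    unfolding fps_sinh_def fps_cosh_def e1 e2
    using fps_two_halves fps_exp_times_exp_neg[of c] by algebra
qed

(* The four cross-multiplied identities, for abstract s = sin(x/2), c = cos(x/2),
   S = sinh(R x/2), C = cosh(R x/2) with R^2 = 3: only the derivative rules and the
   Pythagorean identities are used. *)
lemma half_angle_cross_identities:
  fixes s c S C R h :: "real fps"
  assumes ds: "fps_deriv s = h * c" and dc: "fps_deriv c = - (h * s)"
    and dS: "fps_deriv S = h * R * C" and dC: "fps_deriv C = h * R * S"
    and dR: "fps_deriv R = 0" and dh: "fps_deriv h = 0"
    and "s^2 + c^2 = 1" and "C^2 - S^2 = 1" and "R^2 = 3" and "2 * h = 1"
  defines "N1 \<equiv> 2*R*S*C + 6*s*c"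
    and "N2 \<equiv> 2*R*s*S + 6*c*C"
    and "N3 \<equiv> 4*R*c*S"
    and "N4 \<equiv> 6*c*C + 2*R*s*S + 2 - 2*(C^2+S^2)"
    and "D \<equiv> 3*(c^2 - s^2) + 4 - (C^2 + S^2)"
  shows "fps_deriv N1 * D - N1 * fps_deriv D = N2^2"
    and "fps_deriv N2 * D - N2 * fps_deriv D = N1 * N2 + N3 * D"
    and "fps_deriv N3 * D - N3 * fps_deriv D = N2 * (N2 - N4) + N2 * D"
    and "fps_deriv N4 * D - N4 * fps_deriv D = N2 * (N1 - N3) + N3 * D"
  unfolding N1_def N2_def N3_def N4_def D_def using assms(7-10)
  by (simp only: power2_eq_square fps_deriv_mult fps_deriv_add fps_deriv_sub fps_deriv_numeral
        fps_deriv_neg ds dc dS dC dR dh; algebra)+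

definition num_F1 :: "real fps" where
  "num_F1 = fps_const (sqrt 3) * fps_sinh (sqrt 3) + fps_const 3 * fps_sin 1"

definition num_F2 :: "real fps" where
  "num_F2 = fps_const (2 * sqrt 3) * fps_sin (1/2) * fps_sinh (sqrt 3 / 2)
     + fps_const 6 * fps_cos (1/2) * fps_cosh (sqrt 3 / 2)"

definition num_G1 :: "real fps" where
  "num_G1 = fps_const (4 * sqrt 3) * fps_cos (1/2) * fps_sinh (sqrt 3 / 2)"

definition num_G2 :: "real fps" where
  "num_G2 = fps_const 6 * fps_cos (1/2) * fps_cosh (sqrt 3 / 2)
     + fps_const (2 * sqrt 3) * fps_sin (1/2) * fps_sinh (sqrt 3 / 2)
     + fps_const 2 - fps_const 2 * fps_cosh (sqrt 3)"

(* Delta and the numerators rewritten with the double-angle formulas. *)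
lemma closed_forms_half_angle:
  defines "s \<equiv> fps_sin (1/2)" and "c \<equiv> fps_cos (1/2)"
    and "S \<equiv> fps_sinh (sqrt 3 / 2)" and "C \<equiv> fps_cosh (sqrt 3 / 2)"
    and "R \<equiv> fps_const (sqrt 3)"
  shows "Delta = 3*(c^2 - s^2) + 4 - (C^2 + S^2)"
    and "num_F1 = 2*R*S*C + 6*s*c"
    and "num_F2 = 2*R*s*S + 6*c*C"
    and "num_G1 = 4*R*c*S"
    and "num_G2 = 6*c*C + 2*R*s*S + 2 - 2*(C^2+S^2)"
proof -
  have sin1: "fps_sin 1 = 2*s*c"
    using fps_sin_add[of "1/2::real" "1/2"] by (simp add: s_def c_def)
  have cos1: "fps_cos 1 = c^2 - s^2"
    using fps_cos_add[of "1/2::real" "1/2"] by (simp add: s_def c_def power2_eq_square)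
  have sqrt3: "sqrt 3 = 2 * (sqrt 3 / 2)" by simp
  have sinh3: "fps_sinh (sqrt 3) = 2*S*C"
    by (subst sqrt3) (simp only: fps_sinh_double S_def C_def)
  have cosh3: "fps_cosh (sqrt 3) = C^2 + S^2"
    by (subst sqrt3) (simp only: fps_cosh_double S_def C_def)
  have numerals: "fps_const (2 * sqrt 3) = 2 * R" "fps_const (4 * sqrt 3) = 4 * R"
    "fps_const 2 = (2::real fps)" "fps_const 3 = (3::real fps)"
    "fps_const 4 = (4::real fps)" "fps_const 6 = (6::real fps)"
    by (simp_all add: R_def numeral_fps_const)
  show "Delta = 3*(c^2 - s^2) + 4 - (C^2 + S^2)"
    unfolding Delta_def cos1 cosh3 numerals ..
  show "num_F1 = 2*R*S*C + 6*s*c"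
    unfolding num_F1_def sinh3 sin1 numerals R_def[symmetric] by algebra
  show "num_F2 = 2*R*s*S + 6*c*C"
    unfolding num_F2_def numerals s_def[symmetric] c_def[symmetric] S_def[symmetric]
      C_def[symmetric] ..
  show "num_G1 = 4*R*c*S"
    unfolding num_G1_def numerals c_def[symmetric] S_def[symmetric] ..
  show "num_G2 = 6*c*C + 2*R*s*S + 2 - 2*(C^2+S^2)"
    unfolding num_G2_def numerals cosh3 s_def[symmetric] c_def[symmetric] S_def[symmetric]
      C_def[symmetric] ..
qed

lemma Delta_nth_0: "Delta $ 0 = 6"
  by (simp add: Delta_def fps_cosh_def)

lemma closed_forms_solve_system:
  "solves_system (num_F1 * inverse Delta) (num_F2 * inverse Delta)
     (num_G1 * inverse Delta) (num_G2 * inverse Delta)"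
proof -
  define s c S C R h where "s = fps_sin (1/2::real)" and "c = fps_cos (1/2::real)"
    and "S = fps_sinh (sqrt 3 / 2)" and "C = fps_cosh (sqrt 3 / 2)"
    and "R = fps_const (sqrt 3 :: real)" and "h = fps_const (1/2 :: real)"
  have hR: "h * R = fps_const (sqrt 3 / 2)" by (simp add: h_def R_def)
  have "fps_deriv s = h * c" "fps_deriv c = - (h * s)"
    by (simp_all add: s_def c_def h_def fps_sin_deriv fps_cos_deriv flip: fps_const_neg)
  moreover have "fps_deriv S = h * R * C" "fps_deriv C = h * R * S"
    unfolding hR by (simp_all add: S_def C_def fps_sinh_deriv fps_cosh_deriv)
  moreover have "fps_deriv R = 0" "fps_deriv h = 0"
    by (simp_all add: R_def h_def)
  moreover have "s^2 + c^2 = 1"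
    using fps_sin_cos_sum_of_squares[of "1/2::real"] by (simp add: s_def c_def add.commute)
  moreover have "C^2 - S^2 = 1" by (simp add: S_def C_def fps_cosh_sinh_squares)
  moreover have "R^2 = 3" by (simp add: R_def numeral_fps_const)
  moreover have "2 * h = 1" by (simp add: h_def fps_two_halves)
  ultimately show ?thesis
    using Delta_nth_0
    unfolding closed_forms_half_angle s_def[symmetric] c_def[symmetric]
      S_def[symmetric] C_def[symmetric] R_def[symmetric]
    by (intro quotients_solve_system half_angle_cross_identities) simp_all
qed

lemma closed_forms_initial:
  "(num_F1 * inverse Delta) $ 0 = 0" "(num_F2 * inverse Delta) $ 0 = 1"
  "(num_G1 * inverse Delta) $ 0 = 0" "(num_G2 * inverse Delta) $ 0 = 1"
proof -
  have "inverse Delta $ 0 = 1/6" by (simp add: Delta_nth_0)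
  then show "(num_F1 * inverse Delta) $ 0 = 0" "(num_F2 * inverse Delta) $ 0 = 1"
    "(num_G1 * inverse Delta) $ 0 = 0" "(num_G2 * inverse Delta) $ 0 = 1"
    by (simp_all add: num_F1_def num_F2_def num_G1_def num_G2_def fps_sinh_def fps_cosh_def)
qed

theorem lemma4:
  shows "fps_deriv F1 = F2 ^ 2
    \<and> fps_deriv F2 = F1 * F2 + G1
    \<and> fps_deriv G1 = F2 * (F2 - G2) + F2
    \<and> fps_deriv G2 = F2 * (F1 - G1) + G1
    \<and> fps_nth F1 0 = 0 \<and> fps_nth G1 0 = 0
    \<and> fps_nth F2 0 = 1 \<and> fps_nth G2 0 = 1
    \<and> F1 = (fps_const (sqrt 3) * fps_sinh (sqrt 3) + fps_const 3 * fps_sin 1) * inverse Delta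
    \<and> F2 = (fps_const (2 * sqrt 3) * fps_sin (1/2) * fps_sinh (sqrt 3 / 2)
           + fps_const 6 * fps_cos (1/2) * fps_cosh (sqrt 3 / 2)) * inverse Delta
    \<and> G1 = (fps_const (4 * sqrt 3) * fps_cos (1/2) * fps_sinh (sqrt 3 / 2)) * inverse Delta
    \<and> G2 = (fps_const 6 * fps_cos (1/2) * fps_cosh (sqrt 3 / 2)
           + fps_const (2 * sqrt 3) * fps_sin (1/2) * fps_sinh (sqrt 3 / 2)
           + fps_const 2 - fps_const 2 * fps_cosh (sqrt 3)) * inverse Delta"
proof -
  have closed: "F1 = num_F1 * inverse Delta \<and> F2 = num_F2 * inverse Delta
      \<and> G1 = num_G1 * inverse Delta \<and> G2 = num_G2 * inverse Delta"
    by (rule solves_system_unique[OF egf_system closed_forms_solve_system])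
      (simp_all only: egf_initial closed_forms_initial)
  from egf_system egf_initial closed show ?thesis
    unfolding solves_system_def num_F1_def num_F2_def num_G1_def num_G2_def by blast
qed

end
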